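(* Consider the gradient-descent approximate policy iteration sequence described in the context. Suppose that $\gamma>0$ is such that $\alpha_{GD,\gamma}<1$, that $m+H-1>\log(2\delta_{FV})/\log(1/\alpha)$ (with $\delta_{FV}<\infty$), and that $$\eta>\frac{\log\big(3\sqrt{|S|}\,\|\Phi\|_\infty/\sigma_{\min,\Phi}\big)}{\log(1/\alpha_{GD,\gamma})}.$$ Let $c:=\frac{\sqrt{|S|}\,\|\Phi\|_\infty}{\sigma_{\min,\Phi}}$ and define $$\beta:=\alpha^{m+H-1}\delta_{FV}+c\,\alpha_{GD,\gamma}^\eta(\alpha^{m+H-1}\delta_{FV}+1),$$ $$\tau:=(1+c\,\alpha_{GD,\gamma}^\eta)\Big(\frac{\alpha^m+\alpha^{m+H-1}}{1-\alpha}\delta_{FV}+\delta_{app}+\delta_{FV}\epsilon_{PE}\Big)+\frac{c\,\alpha_{GD,\gamma}^\eta}{1-\alpha}.$$ Then $\beta<1$ and for every $k\ge1$, $$\|J^{\mu_k}-J^*\|_\infty\le\frac{\alpha^{kH}}{1-\alpha}+\frac{2\alpha^H\|J^{\mu_0}-J_0\|_\infty}{1-\alpha}\,k\,\max(\alpha^H,\beta)^{k-1}+\frac{2\alpha^H\frac{\tau}{1-\beta}+\epsilon_{LA}}{(1-\alpha^H)(1-\alpha)}.$$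
   Context: Consider a Markov decision process with finite state space $S$ (with $|S|$ states), finite action space $A$, transition probabilities $P_{ij}(a)$, rewards $r(s,a)\in[0,1]$, and discount factor $\alpha\in(0,1)$. A (deterministic stationary) policy is a map $\mu:S\to A$; its value is $J^\mu(s)=E[\sum_{t\ge0}\alpha^t r(s_t,\mu(s_t))\mid s_0=s]$, and $J^*(s)=\max_\mu J^\mu(s)$. For a policy $\mu$, $(T_\mu J)(s)=r(s,\mu(s))+\alpha\sum_j P_{sj}(\mu(s))J(j)$; the Bellman operator is $(TJ)(s)=\max_{a\in A}\{r(s,a)+\alpha\sum_j P_{sj}(a)J(j)\}$; powers denote repeated application. $\|\cdot\|_\infty$ denotes the max norm and the induced matrix norm; $\|\cdot\|_2$ the Euclidean norm. Gradient-descent approximate policy iteration: fix integers $m\ge1$, $H\ge1$, $\eta\ge1$, a step size $\gamma>0$, constants $\epsilon_{LA},\epsilon_{PE}\ge0$, a feature matrix $\Phi\in\mathbb{R}^{|S|\times d}$ whose row $i$ is $\phi(i)^\top$, and subsets $D_k\subseteq S$ ($k\ge0$) such that $\{\phi(i)\}_{i\in D_k}$ has rank $d$. Let $\Phi_{D_k}$ be the submatrix of $\Phi$ with rows indexed by $D_k$, $P_k\in\{0,1\}^{|D_k|\times|S|}$ the matrix selecting the coordinates in $D_k$, and $\mathcal{M}_{k+1}:=\Phi(\Phi_{D_k}^\top\Phi_{D_k})^{-1}\Phi_{D_k}^\top P_k$. Start with $\theta_0\in\mathbb{R}^d$, $J_0=\Phi\theta_0$, and an arbitrary policy $\mu_0$.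 For each $k\ge0$: $\mu_{k+1}$ is any policy with $\|T^HJ_k-T_{\mu_{k+1}}T^{H-1}J_k\|_\infty\le\epsilon_{LA}$; $w_{k+1}\in\mathbb{R}^{|S|}$ satisfies $w_{k+1}(i)=0$ for $i\notin D_k$ and $\|w_{k+1}\|_\infty\le\epsilon_{PE}$; $\hat J_{k+1}:=T^m_{\mu_{k+1}}T^{H-1}J_k+w_{k+1}$; set $\theta_{k+1,0}=\theta_k$ and for $\ell=1,\dots,\eta$, $\theta_{k+1,\ell}=\theta_{k+1,\ell-1}-\gamma\big(\Phi_{D_k}^\top\Phi_{D_k}\theta_{k+1,\ell-1}-\Phi_{D_k}^\top P_k\hat J_{k+1}\big)$ (gradient descent on $\frac12\sum_{i\in D_k}((\Phi\theta)(i)-\hat J_{k+1}(i))^2$); then $\theta_{k+1}=\theta_{k+1,\eta}$ and $J_{k+1}=\Phi\theta_{k+1}$. Define $\delta_{FV}:=\sup_{k\ge1}\|\mathcal{M}_k\|_\infty$, $\delta_{app}:=\sup_{k\ge1}\sup_\mu\|\mathcal{M}_kJ^\mu-J^\mu\|_\infty$ (inner supremum over all policies), $\alpha_{GD,\gamma}:=\sup_{k\ge0}\max_i|1-\gamma\lambda_i(\Phi_{D_k}^\top\Phi_{D_k})|$ where $\lambda_i$ is the $i$-th eigenvalue, and $\sigma_{\min,\Phi}$ the smallest singular value of $\Phi$. *)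

theory Defs
  imports "HOL-Analysis.Analysis"
begin

text \<open>States: finite type 's; actions: finite type 'a; features: finite type 'd.
  Transition probabilities: P a $ i $ j = P_ij(a).  Rewards: r s a.\<close>

definition supnorm :: "real ^ 'n::finite \<Rightarrow> real" where
  "supnorm v = (MAX i. \<bar>v $ i\<bar>)"

definition matnorm_inf :: "real ^ 'n::finite ^ 'm::finite \<Rightarrow> real" where
  "matnorm_inf A = (MAX i. (\<Sum>j\<in>UNIV. \<bar>A $ i $ j\<bar>))"

definition eigenvalues :: "real ^ 'n::finite ^ 'n \<Rightarrow> real set" where
  "eigenvalues A = {l. \<exists>v. v \<noteq> 0 \<and> A *v v = l *\<^sub>R v}"

definition sigma_min :: "real ^ 'd::finite ^ 's::finite \<Rightarrow> real" where
  "sigma_min Phi = sqrt (Min (eigenvalues (transpose Phi ** Phi)))"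

definition is_mdp :: "('a::finite \<Rightarrow> real ^ 's::finite ^ 's) \<Rightarrow> ('s \<Rightarrow> 'a \<Rightarrow> real) \<Rightarrow> real \<Rightarrow> bool" where
  "is_mdp P r \<alpha> \<longleftrightarrow> (\<forall>a i j. P a $ i $ j \<ge> 0) \<and> (\<forall>a i. (\<Sum>j\<in>UNIV. P a $ i $ j) = 1)
     \<and> (\<forall>s a. 0 \<le> r s a \<and> r s a \<le> 1) \<and> 0 < \<alpha> \<and> \<alpha> < 1"

definition Ppol :: "('a \<Rightarrow> real ^ 's::finite ^ 's) \<Rightarrow> ('s \<Rightarrow> 'a) \<Rightarrow> real ^ 's ^ 's" where
  "Ppol P mu = (\<chi> i j. P (mu i) $ i $ j)"

definition rpol :: "('s::finite \<Rightarrow> 'a \<Rightarrow> real) \<Rightarrow> ('s \<Rightarrow> 'a) \<Rightarrow> real ^ 's" where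
  "rpol r mu = (\<chi> i. r i (mu i))"

text \<open>J^mu(s) = E[sum_t alpha^t r(s_t, mu(s_t)) | s_0 = s] = sum_t alpha^t ((P_mu)^t r_mu)(s).\<close>
definition Jpol :: "('a \<Rightarrow> real ^ 's::finite ^ 's) \<Rightarrow> ('s \<Rightarrow> 'a \<Rightarrow> real) \<Rightarrow> real \<Rightarrow> ('s \<Rightarrow> 'a) \<Rightarrow> real ^ 's" where
  "Jpol P r \<alpha> mu = (\<chi> s. (\<Sum>t. \<alpha> ^ t * ((((*v) (Ppol P mu)) ^^ t) (rpol r mu)) $ s))"

definition Jstar :: "('a::finite \<Rightarrow> real ^ 's::finite ^ 's) \<Rightarrow> ('s \<Rightarrow> 'a \<Rightarrow> real) \<Rightarrow> real \<Rightarrow> real ^ 's" where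
  "Jstar P r \<alpha> = (\<chi> s. Max {Jpol P r \<alpha> mu $ s | mu. True})"

definition Tpol :: "('a \<Rightarrow> real ^ 's::finite ^ 's) \<Rightarrow> ('s \<Rightarrow> 'a \<Rightarrow> real) \<Rightarrow> real \<Rightarrow> ('s \<Rightarrow> 'a) \<Rightarrow> real ^ 's \<Rightarrow> real ^ 's" where
  "Tpol P r \<alpha> mu J = (\<chi> s. r s (mu s) + \<alpha> * (\<Sum>j\<in>UNIV. P (mu s) $ s $ j * J $ j))"

definition Tbell :: "('a::finite \<Rightarrow> real ^ 's::finite ^ 's) \<Rightarrow> ('s \<Rightarrow> 'a \<Rightarrow> real) \<Rightarrow> real \<Rightarrow> real ^ 's \<Rightarrow> real ^ 's" where
  "Tbell P r \<alpha> J = (\<chi> s. MAX a. r s a + \<alpha> * (\<Sum>j\<in>UNIV. P a $ s $ j * J $ j))"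

text \<open>Feature vector phi(i) = row i of Phi.  Phi_D^T Phi_D and Phi_D^T P_D written out.\<close>
definition gram :: "'s set \<Rightarrow> real ^ 'd::finite ^ 's::finite \<Rightarrow> real ^ 'd ^ 'd" where
  "gram D Phi = (\<chi> a b. \<Sum>i\<in>D. Phi $ i $ a * Phi $ i $ b)"

definition restrT :: "'s set \<Rightarrow> real ^ 'd::finite ^ 's::finite \<Rightarrow> real ^ 's ^ 'd" where
  "restrT D Phi = (\<chi> a j. if j \<in> D then Phi $ j $ a else 0)"

definition Mproj :: "'s set \<Rightarrow> real ^ 'd::finite ^ 's::finite \<Rightarrow> real ^ 's ^ 's" where
  "Mproj D Phi = Phi ** matrix_inv (gram D Phi) ** restrT D Phi"

text \<open>One gradient step on 1/2 sum_{i in D} ((Phi theta)(i) - Jhat(i))^2.\<close>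
definition gd_step :: "real \<Rightarrow> 's set \<Rightarrow> real ^ 'd::finite ^ 's::finite \<Rightarrow> real ^ 's \<Rightarrow> real ^ 'd \<Rightarrow> real ^ 'd" where
  "gd_step \<gamma> D Phi Jh \<theta> = \<theta> - \<gamma> *\<^sub>R (gram D Phi *v \<theta> - restrT D Phi *v Jh)"

end

theory Submission
  imports Defs
begin

text \<open>Each iteration performs \<open>H\<close>-step lookahead policy improvement from an estimate \<open>J\<^sub>k\<close> of
  \<open>J\<^sup>\<mu>\<^sup>k\<close>. With \<open>e\<^sub>k = \<parallel>J\<^sub>k - J\<^sup>\<mu>\<^sup>k\<parallel>\<^sub>\<infinity>\<close>, the lookahead policy satisfies
  \<open>\<parallel>J\<^sup>\<mu>\<^sup>k\<^sup>+\<^sup>1 - J\<^sup>*\<parallel>\<^sub>\<infinity> \<le> \<alpha>\<^sup>H \<parallel>J\<^sup>\<mu>\<^sup>k - J\<^sup>*\<parallel>\<^sub>\<infinity> + (\<epsilon>\<^sub>L\<^sub>A + 2 \<alpha>\<^sup>H e\<^sub>k) / (1 - \<alpha>)\<close>.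
  The next estimate comes from \<open>\<eta>\<close> gradient steps towards the least-squares fit of the noisy
  \<open>m\<close>-step rollout target: the rollout contracts the error by \<open>\<alpha>\<^sup>m\<^sup>+\<^sup>H\<^sup>-\<^sup>1\<close>, the fit expands it by at
  most \<open>\<delta>\<^sub>F\<^sub>V\<close> and adds \<open>\<delta>\<^sub>a\<^sub>p\<^sub>p\<close>, and gradient descent shrinks the Euclidean distance to the
  least-squares solution by \<open>\<alpha>\<^sub>G\<^sub>D\<^sup>\<eta>\<close>, at the price of the factor \<open>c\<close> when passing to the sup
  norm of \<open>\<Phi> \<theta>\<close>. Hence \<open>e\<^sub>k\<^sub>+\<^sub>1 \<le> \<beta> e\<^sub>k + \<tau>\<close>, where the conditions on \<open>m + H\<close> and \<open>\<eta>\<close> give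
  \<open>\<alpha>\<^sup>m\<^sup>+\<^sup>H\<^sup>-\<^sup>1 \<delta>\<^sub>F\<^sub>V < 1/2\<close> and \<open>c \<alpha>\<^sub>G\<^sub>D\<^sup>\<eta> < 1/3\<close>, so \<open>\<beta> < 1\<close>. Unrolling the two coupled
  recursions gives the bound.\<close>

section \<open>Sup norm and the induced matrix norm\<close>

lemma supnorm_ge: "\<bar>v $ i\<bar> \<le> supnorm v"
  unfolding supnorm_def by (rule Max_ge) auto

lemma supnorm_le: "(\<And>i. \<bar>v $ i\<bar> \<le> c) \<Longrightarrow> supnorm v \<le> c"
  unfolding supnorm_def by (subst Max_le_iff) auto

lemma supnorm_nonneg: "0 \<le> supnorm v"
  using supnorm_ge[of v] abs_ge_zero order_trans by blast

lemma supnorm_minus_commute: "supnorm (u - v) = supnorm (v - u)"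
  unfolding supnorm_def by (simp add: abs_minus_commute)

lemma supnorm_triangle: "supnorm (u + v) \<le> supnorm u + supnorm v"
  by (rule supnorm_le) (metis abs_triangle_ineq add_mono order_trans supnorm_ge vector_add_component)

lemma supnorm_diff_triangle: "supnorm (u - w) \<le> supnorm (u - v) + supnorm (v - w)"
  using supnorm_triangle[of "u - v" "v - w"] by simp

lemma component_le_add_supnorm_diff: "u $ i \<le> v $ i + supnorm (u - v)"
  using supnorm_ge[of "u - v" i] by simp

lemma supnorm_diff_le_box:
  assumes "\<And>i. 0 \<le> u $ i \<and> u $ i \<le> K" and "\<And>i. 0 \<le> v $ i \<and> v $ i \<le> K"
  shows "supnorm (u - v) \<le> K"
proof (rule supnorm_le)
  fix i
  show "\<bar>(u - v) $ i\<bar> \<le> K" using assms[of i] by (auto simp: abs_le_iff)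
qed

lemma supnorm_diff_le_through_box:
  assumes "\<And>i. 0 \<le> u $ i \<and> u $ i \<le> K" and "\<And>i. 0 \<le> v $ i \<and> v $ i \<le> K"
  shows "supnorm (x - z) \<le> supnorm (x - u) + K + supnorm (z - v)"
  using supnorm_diff_triangle[of x z u] supnorm_diff_triangle[of u z v] supnorm_diff_le_box[OF assms]
  by (simp add: supnorm_minus_commute[of v])

lemma supnorm_le_norm: "supnorm (v::real^'n::finite) \<le> norm v"
  by (rule supnorm_le) (rule component_le_norm_cart)

lemma norm_le_sqrt_card_supnorm: "norm (v::real^'n::finite) \<le> sqrt (real CARD('n)) * supnorm v"
proof -
  have "norm v = sqrt (\<Sum>i\<in>UNIV. (v $ i)\<^sup>2)" by (simp add: norm_vec_def L2_set_def)
  also have "\<dots> \<le> sqrt (\<Sum>i\<in>(UNIV::'n set). (supnorm v)\<^sup>2)"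
    by (intro real_sqrt_le_mono sum_mono) (metis abs_ge_zero power2_abs power_mono supnorm_ge)
  also have "\<dots> = sqrt (real CARD('n)) * supnorm v"
    using supnorm_nonneg[of v] by (simp add: real_sqrt_mult)
  finally show ?thesis .
qed

lemma row_sum_le_matnorm_inf: "(\<Sum>j\<in>UNIV. \<bar>A $ i $ j\<bar>) \<le> matnorm_inf A"
  unfolding matnorm_inf_def by (rule Max_ge) auto

lemma matnorm_inf_nonneg: "0 \<le> matnorm_inf A"
  by (rule order_trans[OF sum_nonneg row_sum_le_matnorm_inf]) simp

lemma supnorm_matrix_vector_mult_le: "supnorm (A *v x) \<le> matnorm_inf A * supnorm x"
proof (rule supnorm_le)
  fix i
  have "\<bar>(A *v x) $ i\<bar> \<le> (\<Sum>j\<in>UNIV. \<bar>A $ i $ j\<bar> * supnorm x)"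
    unfolding matrix_vector_mult_def vec_lambda_beta
    by (rule order_trans[OF sum_abs], rule sum_mono) (simp add: abs_mult mult_left_mono supnorm_ge)
  also have "\<dots> \<le> matnorm_inf A * supnorm x"
    by (simp add: sum_distrib_right[symmetric] mult_right_mono supnorm_nonneg row_sum_le_matnorm_inf)
  finally show "\<bar>(A *v x) $ i\<bar> \<le> matnorm_inf A * supnorm x" .
qed

lemma supnorm_mult_le_of_matnorm_le:
  "matnorm_inf M \<le> \<delta> \<Longrightarrow> supnorm (M *v z) \<le> \<delta> * supnorm z"
  by (meson mult_right_mono order_trans supnorm_matrix_vector_mult_le supnorm_nonneg)

section \<open>Monotone discounted operators\<close>

text \<open>Bertsekas' monotonicity and constant-shift property of dynamic-programming operators.\<close>
definition discount_monotone :: "real \<Rightarrow> (real ^ 'n::finite \<Rightarrow> real ^ 'n) \<Rightarrow> bool" where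
  "discount_monotone \<alpha> F \<longleftrightarrow> (\<forall>u v c. (\<forall>i. u $ i \<le> v $ i + c) \<longrightarrow> (\<forall>i. F u $ i \<le> F v $ i + \<alpha> * c))"

lemma discount_monotoneD:
  "discount_monotone \<alpha> F \<Longrightarrow> (\<And>i. u $ i \<le> v $ i + c) \<Longrightarrow> F u $ i \<le> F v $ i + \<alpha> * c"
  unfolding discount_monotone_def by blast

lemma discount_monotone_mono:
  "discount_monotone \<alpha> F \<Longrightarrow> (\<And>i. u $ i \<le> v $ i) \<Longrightarrow> F u $ i \<le> F v $ i"
  using discount_monotoneD[of \<alpha> F u v 0] by simp

lemma discount_monotone_funpow: "discount_monotone \<alpha> F \<Longrightarrow> discount_monotone (\<alpha> ^ n) (F ^^ n)"
proof (induction n)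
  case 0
  then show ?case by (simp add: discount_monotone_def)
next
  case (Suc n)
  then show ?case
    unfolding discount_monotone_def by (simp add: mult.assoc)
qed

lemma discount_monotone_supnorm:
  assumes "discount_monotone \<alpha> F"
  shows "supnorm (F u - F v) \<le> \<alpha> * supnorm (u - v)"
proof (rule supnorm_le)
  fix i
  have "F u $ i \<le> F v $ i + \<alpha> * supnorm (u - v)"
    by (rule discount_monotoneD[OF assms component_le_add_supnorm_diff])
  moreover have "F v $ i \<le> F u $ i + \<alpha> * supnorm (u - v)"
    by (rule discount_monotoneD[OF assms])
       (metis component_le_add_supnorm_diff supnorm_minus_commute)
  ultimately show "\<bar>(F u - F v) $ i\<bar> \<le> \<alpha> * supnorm (u - v)" by auto
qed

text \<open>Apply the shift property with the smallest entry of \<open>v - y\<close> as the constant.\<close>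
lemma discount_monotone_fixpoint_lower:
  assumes F: "discount_monotone \<alpha> F" and "\<alpha> < 1" and fixed: "F v = v"
    and improves: "\<And>i. y $ i - \<delta> \<le> F y $ i"
  shows "y $ i - \<delta> / (1 - \<alpha>) \<le> v $ i"
proof -
  define c where "c = Min (range (\<lambda>i. v $ i - y $ i))"
  have c_le: "c \<le> v $ i - y $ i" for i
    unfolding c_def by (rule Min_le) auto
  have "c \<in> range (\<lambda>i. v $ i - y $ i)"
    unfolding c_def by (rule Min_in) auto
  then obtain i0 where i0: "c = v $ i0 - y $ i0" by auto
  have "y $ j \<le> v $ j + - c" for j
    using c_le[of j] by simp
  then have "F y $ i0 \<le> F v $ i0 + \<alpha> * (- c)"
    by (rule discount_monotoneD[OF F])
  then have "c \<ge> \<alpha> * c - \<delta>"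
    using improves[of i0] fixed unfolding i0 by (simp add: algebra_simps)
  then have "- \<delta> / (1 - \<alpha>) \<le> c"
    using \<open>\<alpha> < 1\<close> by (simp add: field_simps)
  then show ?thesis using c_le[of i] by simp
qed

section \<open>Discounted Markov decision processes\<close>

locale discounted_mdp =
  fixes P :: "'a::finite \<Rightarrow> real ^ 's::finite ^ 's" and r :: "'s \<Rightarrow> 'a \<Rightarrow> real" and \<alpha> :: real
  assumes is_mdp: "is_mdp P r \<alpha>"
begin

lemma transition_nonneg: "0 \<le> P a $ i $ j"
  and transition_row_sum: "(\<Sum>j\<in>UNIV. P a $ i $ j) = 1"
  and reward_nonneg: "0 \<le> r s a"
  and reward_le_one: "r s a \<le> 1"
  and discount_pos: "0 < \<alpha>"
  and discount_less_one: "\<alpha> < 1"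
  using is_mdp unfolding is_mdp_def by blast+

lemma transition_mean_le_add:
  assumes "\<And>j. u $ j \<le> v $ j + c"
  shows "(\<Sum>j\<in>UNIV. P a $ i $ j * u $ j) \<le> (\<Sum>j\<in>UNIV. P a $ i $ j * v $ j) + c"
proof -
  have "(\<Sum>j\<in>UNIV. P a $ i $ j * u $ j) \<le> (\<Sum>j\<in>UNIV. P a $ i $ j * (v $ j + c))"
    by (rule sum_mono) (simp add: assms transition_nonneg mult_left_mono)
  also have "\<dots> = (\<Sum>j\<in>UNIV. P a $ i $ j * v $ j + c * P a $ i $ j)"
    by (simp add: algebra_simps)
  also have "\<dots> = (\<Sum>j\<in>UNIV. P a $ i $ j * v $ j) + c"
    by (simp add: sum.distrib transition_row_sum flip: sum_distrib_left)
  finally show ?thesis .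
qed

lemma transition_mean_between:
  assumes "\<And>j. lo \<le> u $ j \<and> u $ j \<le> hi"
  shows "lo \<le> (\<Sum>j\<in>UNIV. P a $ i $ j * u $ j) \<and> (\<Sum>j\<in>UNIV. P a $ i $ j * u $ j) \<le> hi"
  using transition_mean_le_add[of "\<chi> j. lo" u 0 a i] transition_mean_le_add[of u "\<chi> j. hi" 0 a i] assms
  by (simp add: transition_row_sum flip: sum_distrib_right)

lemma discount_monotone_Tpol: "discount_monotone \<alpha> (Tpol P r \<alpha> mu)"
  unfolding discount_monotone_def Tpol_def
  using transition_mean_le_add discount_pos by (auto simp flip: distrib_left intro!: mult_left_mono)

lemma discount_monotone_Tbell: "discount_monotone \<alpha> (Tbell P r \<alpha>)"
  unfolding discount_monotone_def
proof (intro allI impI)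
  fix u v :: "real ^ 's" and c s
  assume shift: "\<forall>i. u $ i \<le> v $ i + c"
  have "r s a + \<alpha> * (\<Sum>j\<in>UNIV. P a $ s $ j * u $ j)
      \<le> (MAX a. r s a + \<alpha> * (\<Sum>j\<in>UNIV. P a $ s $ j * v $ j)) + \<alpha> * c" for a
  proof -
    have "r s a + \<alpha> * (\<Sum>j\<in>UNIV. P a $ s $ j * u $ j)
        \<le> r s a + \<alpha> * (\<Sum>j\<in>UNIV. P a $ s $ j * v $ j) + \<alpha> * c"
      using mult_left_mono[OF transition_mean_le_add[of u v c a s]] shift discount_pos
      by (simp add: distrib_left)
    also have "\<dots> \<le> (MAX a. r s a + \<alpha> * (\<Sum>j\<in>UNIV. P a $ s $ j * v $ j)) + \<alpha> * c"
      by (simp add: Max_ge)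
    finally show ?thesis .
  qed
  then show "Tbell P r \<alpha> u $ s \<le> Tbell P r \<alpha> v $ s + \<alpha> * c"
    unfolding Tbell_def by (simp add: Max_le_iff)
qed

lemma Tpol_le_Tbell: "Tpol P r \<alpha> mu u $ s \<le> Tbell P r \<alpha> u $ s"
  unfolding Tpol_def Tbell_def by (simp add: Max_ge)

lemma Tpol_funpow_le_Tbell_funpow: "(Tpol P r \<alpha> mu ^^ n) u $ s \<le> (Tbell P r \<alpha> ^^ n) u $ s"
proof (induction n arbitrary: s)
  case 0
  then show ?case by simp
next
  case (Suc n)
  have "Tpol P r \<alpha> mu ((Tpol P r \<alpha> mu ^^ n) u) $ s \<le> Tpol P r \<alpha> mu ((Tbell P r \<alpha> ^^ n) u) $ s"
    by (rule discount_monotone_mono[OF discount_monotone_Tpol Suc.IH])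
  also have "\<dots> \<le> Tbell P r \<alpha> ((Tbell P r \<alpha> ^^ n) u) $ s"
    by (rule Tpol_le_Tbell)
  finally show ?case by simp
qed

lemma Tbell_bounded:
  assumes "\<And>s. 0 \<le> u $ s \<and> u $ s \<le> 1 / (1 - \<alpha>)"
  shows "0 \<le> Tbell P r \<alpha> u $ s \<and> Tbell P r \<alpha> u $ s \<le> 1 / (1 - \<alpha>)"
proof -
  have "0 \<le> r s a + \<alpha> * (\<Sum>j\<in>UNIV. P a $ s $ j * u $ j)
      \<and> r s a + \<alpha> * (\<Sum>j\<in>UNIV. P a $ s $ j * u $ j) \<le> 1 / (1 - \<alpha>)" for a
  proof -
    have "1 + \<alpha> * (1 / (1 - \<alpha>)) = 1 / (1 - \<alpha>)"
      using discount_less_one by (simp add: field_simps)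
    then show ?thesis
      using transition_mean_between[OF assms, of a s] reward_nonneg[of s a] reward_le_one[of s a]
        discount_pos mult_left_mono[of _ "1 / (1 - \<alpha>)" \<alpha>]
      by (smt (verit) mult_nonneg_nonneg)
  qed
  then show ?thesis
    unfolding Tbell_def by (auto simp: Max_le_iff Max_ge_iff)
qed

lemma Tbell_funpow_bounded:
  assumes "\<And>s. 0 \<le> u $ s \<and> u $ s \<le> 1 / (1 - \<alpha>)"
  shows "0 \<le> (Tbell P r \<alpha> ^^ n) u $ s \<and> (Tbell P r \<alpha> ^^ n) u $ s \<le> 1 / (1 - \<alpha>)"
  by (induction n arbitrary: s) (simp_all add: assms Tbell_bounded)

definition expected_reward :: "('s \<Rightarrow> 'a) \<Rightarrow> nat \<Rightarrow> real ^ 's" where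
  "expected_reward mu t = ((*v) (Ppol P mu) ^^ t) (rpol r mu)"

lemma expected_reward_Suc:
  "expected_reward mu (Suc t) $ s = (\<Sum>j\<in>UNIV. P (mu s) $ s $ j * expected_reward mu t $ j)"
  by (simp add: expected_reward_def matrix_vector_mult_def Ppol_def)

lemma expected_reward_bounded: "0 \<le> expected_reward mu t $ s \<and> expected_reward mu t $ s \<le> 1"
proof (induction t arbitrary: s)
  case 0
  then show ?case by (simp add: expected_reward_def rpol_def reward_nonneg reward_le_one)
next
  case (Suc t)
  then show ?case unfolding expected_reward_Suc by (rule transition_mean_between)
qed

lemma summable_discounted_reward: "summable (\<lambda>t. \<alpha> ^ t * expected_reward mu (t + k) $ s)"
proof (rule summable_comparison_test'[where g = "\<lambda>t. \<alpha> ^ t"])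
  show "summable (\<lambda>t. \<alpha> ^ t)"
    using discount_pos discount_less_one by (simp add: summable_geometric)
  show "norm (\<alpha> ^ t * expected_reward mu (t + k) $ s) \<le> \<alpha> ^ t" for t
    using expected_reward_bounded[of mu "t + k" s] discount_pos by (simp add: abs_mult mult_left_le)
qed

lemma Jpol_eq_suminf: "Jpol P r \<alpha> mu $ s = (\<Sum>t. \<alpha> ^ t * expected_reward mu t $ s)"
  by (simp add: Jpol_def expected_reward_def)

lemma Jpol_bounded: "0 \<le> Jpol P r \<alpha> mu $ s \<and> Jpol P r \<alpha> mu $ s \<le> 1 / (1 - \<alpha>)"
proof
  have "0 \<le> \<alpha> ^ t * expected_reward mu t $ s" for t
    using expected_reward_bounded[of mu t s] discount_pos by simp
  then show "0 \<le> Jpol P r \<alpha> mu $ s"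
    unfolding Jpol_eq_suminf using summable_discounted_reward[of mu 0 s] by (simp add: suminf_nonneg)
  have "(\<Sum>t. \<alpha> ^ t * expected_reward mu t $ s) \<le> (\<Sum>t. \<alpha> ^ t)"
    using summable_discounted_reward[of mu 0 s] expected_reward_bounded discount_pos discount_less_one
    by (intro suminf_le) (auto simp: mult_left_le summable_geometric)
  then show "Jpol P r \<alpha> mu $ s \<le> 1 / (1 - \<alpha>)"
    unfolding Jpol_eq_suminf using discount_pos discount_less_one by (simp add: suminf_geometric)
qed

lemma Tpol_Jpol: "Tpol P r \<alpha> mu (Jpol P r \<alpha> mu) = Jpol P r \<alpha> mu"
proof (rule vec_eq_iff[THEN iffD2], rule allI)
  fix s
  have "(\<Sum>j\<in>UNIV. P (mu s) $ s $ j * Jpol P r \<alpha> mu $ j)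
      = (\<Sum>j\<in>UNIV. \<Sum>t. P (mu s) $ s $ j * (\<alpha> ^ t * expected_reward mu t $ j))"
    unfolding Jpol_eq_suminf using summable_discounted_reward[of mu 0]
    by (intro sum.cong) (simp_all add: suminf_mult)
  also have "\<dots> = (\<Sum>t. \<Sum>j\<in>UNIV. P (mu s) $ s $ j * (\<alpha> ^ t * expected_reward mu t $ j))"
    using summable_discounted_reward[of mu 0] by (intro suminf_sum[symmetric] summable_mult) simp
  also have "\<dots> = (\<Sum>t. \<alpha> ^ t * expected_reward mu (t + 1) $ s)"
    by (simp add: expected_reward_Suc sum_distrib_left algebra_simps)
  finally have "r s (mu s) + \<alpha> * (\<Sum>j\<in>UNIV. P (mu s) $ s $ j * Jpol P r \<alpha> mu $ j)
      = \<alpha> ^ 0 * expected_reward mu 0 $ s + (\<Sum>t. \<alpha> ^ Suc t * expected_reward mu (Suc t) $ s)"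
    using summable_discounted_reward[of mu 1 s]
    by (simp add: expected_reward_def rpol_def suminf_mult[symmetric] mult.assoc)
  also have "\<dots> = Jpol P r \<alpha> mu $ s"
    unfolding Jpol_eq_suminf using suminf_split_head[OF summable_discounted_reward[of mu 0 s]]
    by simp
  finally show "Tpol P r \<alpha> mu (Jpol P r \<alpha> mu) $ s = Jpol P r \<alpha> mu $ s"
    by (simp add: Tpol_def)
qed

lemma Tpol_funpow_Jpol: "(Tpol P r \<alpha> mu ^^ n) (Jpol P r \<alpha> mu) = Jpol P r \<alpha> mu"
  by (induction n) (simp_all add: Tpol_Jpol)

lemma Jstar_eq_Max: "Jstar P r \<alpha> $ s = (MAX mu. Jpol P r \<alpha> mu $ s)"
  unfolding Jstar_def by (simp add: full_SetCompr_eq)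

lemma Jpol_le_Jstar: "Jpol P r \<alpha> mu $ s \<le> Jstar P r \<alpha> $ s"
  unfolding Jstar_eq_Max by (simp add: Max_ge)

lemma Jstar_attained: obtains nu where "Jstar P r \<alpha> $ s = Jpol P r \<alpha> nu $ s"
proof -
  have "Max (range (\<lambda>mu. Jpol P r \<alpha> mu $ s)) \<in> range (\<lambda>mu. Jpol P r \<alpha> mu $ s)"
    by (rule Max_in) auto
  then obtain nu where "(MAX mu. Jpol P r \<alpha> mu $ s) = Jpol P r \<alpha> nu $ s"
    by blast
  then show ?thesis
    using that unfolding Jstar_eq_Max by blast
qed

lemma Jstar_bounded: "0 \<le> Jstar P r \<alpha> $ s \<and> Jstar P r \<alpha> $ s \<le> 1 / (1 - \<alpha>)"
  by (metis Jstar_attained Jpol_bounded)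

lemma Jstar_le_lookahead:
  "Jstar P r \<alpha> $ s \<le> (Tbell P r \<alpha> ^^ H) v $ s + \<alpha> ^ H * supnorm (v - Jstar P r \<alpha>)"
proof -
  obtain nu where nu: "Jstar P r \<alpha> $ s = Jpol P r \<alpha> nu $ s"
    by (rule Jstar_attained)
  have mono_nu: "discount_monotone (\<alpha> ^ H) (Tpol P r \<alpha> nu ^^ H)"
    by (rule discount_monotone_funpow[OF discount_monotone_Tpol])
  have "Jpol P r \<alpha> nu $ s = (Tpol P r \<alpha> nu ^^ H) (Jpol P r \<alpha> nu) $ s"
    by (simp add: Tpol_funpow_Jpol)
  also have "\<dots> \<le> (Tpol P r \<alpha> nu ^^ H) (Jstar P r \<alpha>) $ s"
    by (rule discount_monotone_mono[OF mono_nu Jpol_le_Jstar])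
  also have "\<dots> \<le> (Tpol P r \<alpha> nu ^^ H) v $ s + \<alpha> ^ H * supnorm (Jstar P r \<alpha> - v)"
    by (rule discount_monotoneD[OF mono_nu component_le_add_supnorm_diff])
  also have "\<dots> \<le> (Tbell P r \<alpha> ^^ H) v $ s + \<alpha> ^ H * supnorm (v - Jstar P r \<alpha>)"
    using Tpol_funpow_le_Tbell_funpow by (simp add: supnorm_minus_commute)
  finally show ?thesis
    using nu by simp
qed

lemma Tbell_funpow_Jpol_increasing:
  "(Tbell P r \<alpha> ^^ h) (Jpol P r \<alpha> mu) $ i \<le> Tbell P r \<alpha> ((Tbell P r \<alpha> ^^ h) (Jpol P r \<alpha> mu)) $ i"
proof -
  have "Jpol P r \<alpha> mu $ j \<le> Tbell P r \<alpha> (Jpol P r \<alpha> mu) $ j" for j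
    by (metis Tpol_Jpol Tpol_le_Tbell)
  then have "(Tbell P r \<alpha> ^^ h) (Jpol P r \<alpha> mu) $ i \<le> (Tbell P r \<alpha> ^^ h) (Tbell P r \<alpha> (Jpol P r \<alpha> mu)) $ i"
    by (rule discount_monotone_mono[OF discount_monotone_funpow[OF discount_monotone_Tbell]])
  then show ?thesis
    by (simp add: funpow_swap1)
qed

lemma Jpol_ge_lookahead:
  assumes "H \<ge> 1"
    and greedy: "supnorm ((Tbell P r \<alpha> ^^ H) u - Tpol P r \<alpha> mu' ((Tbell P r \<alpha> ^^ (H - 1)) u)) \<le> \<epsilon>"
  shows "(Tbell P r \<alpha> ^^ H) (Jpol P r \<alpha> mu) $ s - (\<epsilon> + 2 * \<alpha> ^ H * supnorm (u - Jpol P r \<alpha> mu)) / (1 - \<alpha>)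
      \<le> Jpol P r \<alpha> mu' $ s"
proof -
  let ?T = "Tbell P r \<alpha>" and ?T' = "Tpol P r \<alpha> mu'" and ?V = "Jpol P r \<alpha> mu"
  obtain h where H: "H = Suc h"
    using \<open>H \<ge> 1\<close> by (metis Suc_pred' less_eq_Suc_le One_nat_def)
  define e where "e = supnorm (u - ?V)"
  define y where "y = (?T ^^ h) ?V"
  have Ty: "?T y = (?T ^^ H) ?V"
    unfolding y_def H by simp
  have improves: "?T y $ i - (\<epsilon> + 2 * \<alpha> ^ H * e) \<le> ?T' (?T y) $ i" for i
  proof -
    have "?T y $ i \<le> (?T ^^ H) u $ i + \<alpha> ^ H * e"
      unfolding Ty e_def
      by (rule discount_monotoneD[OF discount_monotone_funpow[OF discount_monotone_Tbell]])
         (metis component_le_add_supnorm_diff supnorm_minus_commute)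
    also have "(?T ^^ H) u $ i \<le> ?T' ((?T ^^ h) u) $ i + \<epsilon>"
      using supnorm_ge[of "(?T ^^ H) u - ?T' ((?T ^^ (H - 1)) u)" i] greedy H by simp
    also have "?T' ((?T ^^ h) u) $ i \<le> ?T' y $ i + \<alpha> * (\<alpha> ^ h * e)"
      unfolding y_def e_def
      by (intro discount_monotoneD[OF discount_monotone_Tpol]
            discount_monotoneD[OF discount_monotone_funpow[OF discount_monotone_Tbell]]
            component_le_add_supnorm_diff)
    also have "?T' y $ i \<le> ?T' (?T y) $ i"
      unfolding y_def by (rule discount_monotone_mono[OF discount_monotone_Tpol Tbell_funpow_Jpol_increasing])
    finally show ?thesis
      unfolding H by (simp add: algebra_simps)
  qed
  have "?T y $ s - (\<epsilon> + 2 * \<alpha> ^ H * e) / (1 - \<alpha>) \<le> Jpol P r \<alpha> mu' $ s"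
    by (rule discount_monotone_fixpoint_lower[OF discount_monotone_Tpol discount_less_one Tpol_Jpol improves])
  then show ?thesis
    unfolding Ty e_def .
qed

lemma policy_improvement:
  assumes "H \<ge> 1"
    and "supnorm ((Tbell P r \<alpha> ^^ H) u - Tpol P r \<alpha> mu' ((Tbell P r \<alpha> ^^ (H - 1)) u)) \<le> \<epsilon>"
  shows "supnorm (Jpol P r \<alpha> mu' - Jstar P r \<alpha>)
      \<le> \<alpha> ^ H * supnorm (Jpol P r \<alpha> mu - Jstar P r \<alpha>) + (\<epsilon> + 2 * \<alpha> ^ H * supnorm (u - Jpol P r \<alpha> mu)) / (1 - \<alpha>)"
proof (rule supnorm_le)
  fix s
  show "\<bar>(Jpol P r \<alpha> mu' - Jstar P r \<alpha>) $ s\<bar>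
      \<le> \<alpha> ^ H * supnorm (Jpol P r \<alpha> mu - Jstar P r \<alpha>) + (\<epsilon> + 2 * \<alpha> ^ H * supnorm (u - Jpol P r \<alpha> mu)) / (1 - \<alpha>)"
    using Jpol_ge_lookahead[OF assms, of mu s] Jstar_le_lookahead[of s H "Jpol P r \<alpha> mu"]
      Jpol_le_Jstar[of mu' s]
    by (simp add: abs_le_iff)
qed

end

section \<open>Symmetric matrices\<close>

definition symmetric_matrix :: "real ^ 'n::finite ^ 'n \<Rightarrow> bool" where
  "symmetric_matrix A \<longleftrightarrow> transpose A = A"

lemma symmetric_matrix_inner: "symmetric_matrix A \<Longrightarrow> x \<bullet> (A *v y) = (A *v x) \<bullet> y"
  unfolding symmetric_matrix_def by (metis dot_lmul_matrix transpose_matrix_vector)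

lemma symmetric_matrix_diff:
  "symmetric_matrix A \<Longrightarrow> symmetric_matrix B \<Longrightarrow> symmetric_matrix (A - B)"
  unfolding symmetric_matrix_def transpose_def by (simp add: vec_eq_iff)

lemma symmetric_matrix_scaleR: "symmetric_matrix A \<Longrightarrow> symmetric_matrix (c *\<^sub>R A)"
  unfolding symmetric_matrix_def by (simp add: transpose_scalar)

lemma symmetric_matrix_mat: "symmetric_matrix (mat c)"
  unfolding symmetric_matrix_def by simp

lemma symmetric_matrix_uminus: "symmetric_matrix A \<Longrightarrow> symmetric_matrix (- A)"
  unfolding symmetric_matrix_def transpose_def by (simp add: vec_eq_iff)

lemma symmetric_matrix_transpose_mult_self: "symmetric_matrix (transpose A ** A)"
  unfolding symmetric_matrix_def by (simp add: matrix_transpose_mul)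

lemma inner_transpose_mult_self:
  fixes A :: "real ^ 'n::finite ^ 'm::finite"
  shows "x \<bullet> ((transpose A ** A) *v x) = (A *v x) \<bullet> (A *v x)"
proof -
  have "x \<bullet> ((transpose A ** A) *v x) = x \<bullet> ((A *v x) v* A)"
    by (simp flip: matrix_vector_mul_assoc)
  also have "\<dots> = (A *v x) \<bullet> (A *v x)"
    by (simp add: inner_commute[of x] dot_lmul_matrix)
  finally show ?thesis .
qed

lemma uminus_matrix_vector_mult: "(- A) *v x = - (A *v (x::real ^ 'n::finite))"
  by (simp add: vec_eq_iff matrix_vector_mult_def flip: sum_negf)

lemma scaleR_mat_one_diff_vector_mult: "(c *\<^sub>R mat 1 - A) *v x = c *\<^sub>R x - A *v (x::real ^ 'n::finite)"
  by (simp add: matrix_vector_mult_diff_rdistrib flip: scaleR_matrix_vector_assoc)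

text \<open>The first-variation argument: along \<open>x - t B x\<close> the form is \<open>t (t k - 2 \<parallel>B x\<parallel>\<^sup>2)\<close>,
  negative for small \<open>t > 0\<close> unless \<open>B x = 0\<close>.\<close>
lemma psd_quadratic_form_zero_imp_kernel:
  assumes S: "symmetric_matrix B" and psd: "\<And>y. 0 \<le> y \<bullet> (B *v y)" and "x \<bullet> (B *v x) = 0"
  shows "B *v x = 0"
proof (rule ccontr)
  define u where "u = B *v x"
  assume "B *v x \<noteq> 0"
  then have u_pos: "0 < u \<bullet> u" by (simp add: u_def)
  define k where "k = u \<bullet> (B *v u)"
  define t where "t = (u \<bullet> u) / (k + 1)"
  have k: "0 \<le> k" using psd by (simp add: k_def)
  have t: "0 < t" using u_pos k by (simp add: t_def)
  have "t * k < u \<bullet> u"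
    using u_pos k by (simp add: t_def field_simps)
  then have "t * k - 2 * (u \<bullet> u) < 0"
    using u_pos by linarith
  then have "t * (t * k - 2 * (u \<bullet> u)) < 0"
    using t by (simp add: mult_pos_neg)
  moreover have "(x - t *\<^sub>R u) \<bullet> (B *v (x - t *\<^sub>R u)) = t * (t * k - 2 * (u \<bullet> u))"
  proof -
    have xu: "x \<bullet> u = 0" and xBu: "x \<bullet> (B *v u) = u \<bullet> u"
      using \<open>x \<bullet> (B *v x) = 0\<close> by (simp_all add: symmetric_matrix_inner[OF S] u_def)
    have "B *v (x - t *\<^sub>R u) = u - t *\<^sub>R (B *v u)"
      by (simp add: u_def matrix_vector_mult_diff_distrib matrix_vector_mult_scaleR)
    then have "(x - t *\<^sub>R u) \<bullet> (B *v (x - t *\<^sub>R u))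
        = x \<bullet> u - t * (u \<bullet> u) - t * (x \<bullet> (B *v u) - t * k)"
      unfolding k_def by (simp only: inner_diff_left inner_diff_right inner_scaleR_left inner_scaleR_right)
    then show ?thesis
      unfolding xu xBu by (simp add: algebra_simps)
  qed
  ultimately show False
    using psd[of "x - t *\<^sub>R u"] by linarith
qed

lemma symmetric_matrix_max_eigenvalue:
  assumes S: "symmetric_matrix A"
  obtains l where "l \<in> eigenvalues A" and "\<And>x. x \<bullet> (A *v x) \<le> l * (x \<bullet> x)"
proof -
  have "continuous_on (sphere 0 1) (\<lambda>x. x \<bullet> (A *v x))"
    by (intro continuous_on_inner continuous_on_id linear_continuous_on matrix_vector_mul_bounded_linear)
  moreover have "sphere (0::real ^ 'n) 1 \<noteq> {}"
    using vector_choose_size[of 1] by auto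
  ultimately obtain x0 where "x0 \<in> sphere 0 1" and "\<forall>y\<in>sphere 0 1. y \<bullet> (A *v y) \<le> x0 \<bullet> (A *v x0)"
    using continuous_attains_sup[OF compact_sphere] by blast
  then have x0: "norm x0 = 1" and max: "\<And>y. norm y = 1 \<Longrightarrow> y \<bullet> (A *v y) \<le> x0 \<bullet> (A *v x0)"
    by simp_all
  define l where "l = x0 \<bullet> (A *v x0)"
  have bound: "x \<bullet> (A *v x) \<le> l * (x \<bullet> x)" for x
  proof (cases "x = 0")
    case False
    have "((1 / norm x) *\<^sub>R x) \<bullet> (A *v ((1 / norm x) *\<^sub>R x)) \<le> l"
      unfolding l_def using False by (intro max) simp
    then show ?thesis
      using False by (simp add: matrix_vector_mult_scaleR power2_norm_eq_inner[symmetric]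
          divide_le_eq power2_eq_square mult.commute)
  qed simp
  have "(l *\<^sub>R mat 1 - A) *v x0 = 0"
  proof (rule psd_quadratic_form_zero_imp_kernel)
    show "symmetric_matrix (l *\<^sub>R mat 1 - A)"
      by (intro symmetric_matrix_diff symmetric_matrix_scaleR symmetric_matrix_mat S)
    show "0 \<le> y \<bullet> ((l *\<^sub>R mat 1 - A) *v y)" for y
      using bound[of y] by (simp add: scaleR_mat_one_diff_vector_mult inner_diff_right)
    show "x0 \<bullet> ((l *\<^sub>R mat 1 - A) *v x0) = 0"
      using x0 by (simp add: scaleR_mat_one_diff_vector_mult inner_diff_right l_def dot_square_norm)
  qed
  then have "A *v x0 = l *\<^sub>R x0"
    by (simp add: scaleR_mat_one_diff_vector_mult)
  moreover have "x0 \<noteq> 0" using x0 by auto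
  ultimately have "l \<in> eigenvalues A"
    unfolding eigenvalues_def by (auto intro!: exI[of _ x0])
  then show ?thesis
    by (rule that) (rule bound)
qed

lemma symmetric_matrix_min_eigenvalue:
  assumes "symmetric_matrix A"
  obtains l where "l \<in> eigenvalues A" and "\<And>x. l * (x \<bullet> x) \<le> x \<bullet> (A *v x)"
proof -
  obtain l where l: "l \<in> eigenvalues (- A)" and bound: "\<And>x. x \<bullet> ((- A) *v x) \<le> l * (x \<bullet> x)"
    using symmetric_matrix_max_eigenvalue[OF symmetric_matrix_uminus[OF assms]] by blast
  from l obtain v where "v \<noteq> 0" and "- (A *v v) = l *\<^sub>R v"
    unfolding eigenvalues_def uminus_matrix_vector_mult by blast
  then have "- l \<in> eigenvalues A"
    unfolding eigenvalues_def by (auto intro!: exI[of _ v] simp: minus_equation_iff[of "A *v v"])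
  moreover have "- l * (x \<bullet> x) \<le> x \<bullet> (A *v x)" for x
    using bound[of x] by (simp add: uminus_matrix_vector_mult)
  ultimately show ?thesis
    by (rule that)
qed

lemma symmetric_matrix_eigenvalues_nonempty: "symmetric_matrix A \<Longrightarrow> eigenvalues A \<noteq> {}"
  by (metis empty_iff symmetric_matrix_max_eigenvalue)

lemma symmetric_matrix_eigenvalues_finite:
  assumes S: "symmetric_matrix A"
  shows "finite (eigenvalues A)"
proof -
  define ev where "ev l = (SOME v. v \<noteq> 0 \<and> A *v v = l *\<^sub>R v)" for l
  have ev: "ev l \<noteq> 0 \<and> A *v ev l = l *\<^sub>R ev l" if "l \<in> eigenvalues A" for l
    using that unfolding eigenvalues_def ev_def by (metis (mono_tags, lifting) someI_ex mem_Collect_eq)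
  have "inj_on ev (eigenvalues A)"
    by (rule inj_onI) (metis ev scaleR_cancel_right)
  moreover have "pairwise orthogonal (ev ` eigenvalues A)"
  proof (clarsimp simp: pairwise_def)
    fix l1 l2
    assume l: "l1 \<in> eigenvalues A" "l2 \<in> eigenvalues A" "ev l1 \<noteq> ev l2"
    have "l1 * (ev l1 \<bullet> ev l2) = l2 * (ev l1 \<bullet> ev l2)"
      using symmetric_matrix_inner[OF S, of "ev l1" "ev l2"] ev[OF l(1)] ev[OF l(2)] by auto
    then show "orthogonal (ev l1) (ev l2)"
      using l by (auto simp: orthogonal_def)
  qed
  then have "independent (ev ` eigenvalues A)"
    using ev by (intro pairwise_orthogonal_independent) auto
  then have "finite (ev ` eigenvalues A)"
    using independent_bound by blast
  ultimately show ?thesis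
    using finite_imageD by blast
qed

lemma eigenvalue_of_square:
  fixes B :: "real ^ 'n::finite ^ 'n"
  assumes "\<mu> \<in> eigenvalues (B ** B)" and "0 \<le> \<mu>"
  shows "sqrt \<mu> \<in> eigenvalues B \<or> - sqrt \<mu> \<in> eigenvalues B"
proof -
  obtain v where v: "v \<noteq> 0" "(B ** B) *v v = \<mu> *\<^sub>R v"
    using assms(1) unfolding eigenvalues_def by blast
  define s where "s = sqrt \<mu>"
  define w where "w = B *v v + s *\<^sub>R v"
  have "B *v (B *v v) = \<mu> *\<^sub>R v"
    using v(2) by (simp add: matrix_vector_mul_assoc)
  then have "B *v w = \<mu> *\<^sub>R v + s *\<^sub>R (B *v v)"
    by (simp add: w_def matrix_vector_right_distrib matrix_vector_mult_scaleR)
  also have "\<dots> = s *\<^sub>R w"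
    using \<open>0 \<le> \<mu>\<close> by (simp add: w_def s_def scaleR_add_right add.commute)
  finally have "B *v w = s *\<^sub>R w" .
  moreover have "w = 0 \<Longrightarrow> B *v v = (- s) *\<^sub>R v"
    by (simp add: w_def eq_neg_iff_add_eq_0)
  ultimately show ?thesis
    using v(1) unfolding eigenvalues_def s_def by blast
qed

lemma symmetric_matrix_square_eigenvalue_le:
  assumes S: "symmetric_matrix B" and ev: "\<And>l. l \<in> eigenvalues B \<Longrightarrow> \<bar>l\<bar> \<le> a"
    and \<mu>: "\<mu> \<in> eigenvalues (B ** B)"
  shows "\<mu> \<le> a\<^sup>2"
proof -
  obtain v where v: "v \<noteq> 0" "(B ** B) *v v = \<mu> *\<^sub>R v"
    using \<mu> unfolding eigenvalues_def by blast
  have "transpose B = B"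
    using S by (simp add: symmetric_matrix_def)
  then have "\<mu> * (v \<bullet> v) = (B *v v) \<bullet> (B *v v)"
    using inner_transpose_mult_self[of v B] v(2) by simp
  then have "0 \<le> \<mu> * (v \<bullet> v)"
    by simp
  moreover have "0 < v \<bullet> v"
    using v(1) by simp
  ultimately have "0 \<le> \<mu>"
    by (auto simp: zero_le_mult_iff)
  then have "\<bar>sqrt \<mu>\<bar> \<le> a"
    using eigenvalue_of_square[OF \<mu>] ev[of "sqrt \<mu>"] ev[of "- sqrt \<mu>"] by auto
  then have "(sqrt \<mu>)\<^sup>2 \<le> a\<^sup>2"
    using \<open>0 \<le> \<mu>\<close> by (intro power_mono) simp_all
  then show ?thesis
    using \<open>0 \<le> \<mu>\<close> by simp
qed

lemma symmetric_matrix_norm_le: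
  assumes S: "symmetric_matrix B" and ev: "\<And>l. l \<in> eigenvalues B \<Longrightarrow> \<bar>l\<bar> \<le> a"
  shows "norm (B *v x) \<le> a * norm x"
proof -
  obtain l where "l \<in> eigenvalues B"
    using symmetric_matrix_eigenvalues_nonempty[OF S] by blast
  then have a: "0 \<le> a"
    using ev[of l] by linarith
  have "transpose B = B"
    using S by (simp add: symmetric_matrix_def)
  then have square: "x \<bullet> ((B ** B) *v x) = (B *v x) \<bullet> (B *v x)"
    using inner_transpose_mult_self[of x B] by simp
  have "symmetric_matrix (B ** B)"
    using symmetric_matrix_transpose_mult_self[of B] S by (simp add: symmetric_matrix_def)
  then obtain \<mu> where \<mu>: "\<mu> \<in> eigenvalues (B ** B)" and bound: "\<And>y. y \<bullet> ((B ** B) *v y) \<le> \<mu> * (y \<bullet> y)"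
    using symmetric_matrix_max_eigenvalue by blast
  have "(norm (B *v x))\<^sup>2 = x \<bullet> ((B ** B) *v x)"
    using square by (simp add: power2_norm_eq_inner)
  also have "\<dots> \<le> \<mu> * (x \<bullet> x)"
    by (rule bound)
  also have "\<dots> \<le> a\<^sup>2 * (x \<bullet> x)"
    using mult_right_mono[OF symmetric_matrix_square_eigenvalue_le[OF S ev \<mu>], of "x \<bullet> x"] by simp
  also have "\<dots> = (a * norm x)\<^sup>2"
    by (simp only: power_mult_distrib power2_norm_eq_inner)
  finally show ?thesis
    by (rule power2_le_imp_le[OF _ mult_nonneg_nonneg[OF a norm_ge_zero]])
qed

section \<open>Least squares on the sampled states and gradient descent\<close>

definition restrict_rows :: "'s set \<Rightarrow> real ^ 'd::finite ^ 's::finite \<Rightarrow> real ^ 'd ^ 's" where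
  "restrict_rows D Phi = (\<chi> i j. if i \<in> D then Phi $ i $ j else 0)"

lemma restrict_rows_mult_component:
  "(restrict_rows D Phi *v x) $ i = (if i \<in> D then (Phi *v x) $ i else 0)"
  by (simp add: restrict_rows_def matrix_vector_mult_def)

lemma gram_eq_transpose_mult_self: "gram D Phi = transpose (restrict_rows D Phi) ** restrict_rows D Phi"
proof -
  have "(\<Sum>i\<in>UNIV. (if i \<in> D then Phi $ i $ a else 0) * (if i \<in> D then Phi $ i $ b else 0))
      = (\<Sum>i\<in>D. Phi $ i $ a * Phi $ i $ b)" for a b
    by (simp add: if_distrib[of "\<lambda>x. x * _"] sum.If_cases)
  then show ?thesis
    by (simp add: gram_def restrict_rows_def transpose_def matrix_matrix_mult_def vec_eq_iff)
qed

lemma symmetric_matrix_gram: "symmetric_matrix (gram D Phi)"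
  unfolding gram_eq_transpose_mult_self by (rule symmetric_matrix_transpose_mult_self)

lemma full_rank_mult_eq_0_on_rows:
  fixes Phi :: "real ^ 'd::finite ^ 's::finite"
  assumes rank: "dim ((\<lambda>i. Phi $ i) ` D) = CARD('d)"
    and zero: "\<And>i. i \<in> D \<Longrightarrow> (Phi *v x) $ i = 0"
  shows "x = 0"
proof -
  have "span ((\<lambda>i. Phi $ i) ` D) = UNIV"
    using dim_eq_full[of "(\<lambda>i. Phi $ i) ` D"] rank by simp
  moreover have "orthogonal x y" if "y \<in> (\<lambda>i. Phi $ i) ` D" for y
    using that zero by (auto simp: orthogonal_def matrix_vector_mult_def inner_vec_def mult.commute)
  ultimately have "orthogonal x x"
    by (intro orthogonal_to_span[of x]) auto
  then show ?thesis
    by (simp add: orthogonal_def)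
qed

lemma gram_invertible:
  fixes Phi :: "real ^ 'd::finite ^ 's::finite"
  assumes rank: "dim ((\<lambda>i. Phi $ i) ` D) = CARD('d)"
  shows "gram D Phi ** matrix_inv (gram D Phi) = mat 1"
proof -
  have "x = 0" if "gram D Phi *v x = 0" for x
  proof (rule full_rank_mult_eq_0_on_rows[OF rank])
    have "(restrict_rows D Phi *v x) \<bullet> (restrict_rows D Phi *v x) = 0"
      using that inner_transpose_mult_self[of x "restrict_rows D Phi"] by (simp add: gram_eq_transpose_mult_self)
    then show "(Phi *v x) $ i = 0" if "i \<in> D" for i
      using that restrict_rows_mult_component[of D Phi x i] by (simp add: vec_eq_iff)
  qed
  then have "invertible (gram D Phi)"
    by (meson invertible_left_inverse matrix_left_invertible_ker)
  then show ?thesis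
    unfolding invertible_def matrix_inv_def by (rule someI_ex[THEN conjunct1])
qed

lemma full_rank_matrix_vector_mult_eq_0:
  fixes Phi :: "real ^ 'd::finite ^ 's::finite"
  assumes "dim ((\<lambda>i. Phi $ i) ` D) = CARD('d)" and "Phi *v x = 0"
  shows "x = 0"
  by (rule full_rank_mult_eq_0_on_rows[OF assms(1)]) (simp add: assms(2))

lemma eigenvalue_transpose_mult_self_pos:
  fixes Phi :: "real ^ 'd::finite ^ 's::finite"
  assumes inj: "\<And>x. Phi *v x = 0 \<Longrightarrow> x = 0" and "l \<in> eigenvalues (transpose Phi ** Phi)"
  shows "0 < l"
proof -
  obtain v where v: "v \<noteq> 0" "(transpose Phi ** Phi) *v v = l *\<^sub>R v"
    using assms(2) unfolding eigenvalues_def by blast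
  have "Phi *v v \<noteq> 0"
    using inj v(1) by blast
  then have "0 < (Phi *v v) \<bullet> (Phi *v v)"
    by simp
  also have "(Phi *v v) \<bullet> (Phi *v v) = l * (v \<bullet> v)"
    using inner_transpose_mult_self[of v Phi] v(2) by simp
  finally show ?thesis
    using inner_ge_zero[of v] by (auto simp: zero_less_mult_iff)
qed

lemma sigma_min_pos_norm_le:
  fixes Phi :: "real ^ 'd::finite ^ 's::finite"
  assumes inj: "\<And>x. Phi *v x = 0 \<Longrightarrow> x = 0"
  shows "0 < sigma_min Phi" and "sigma_min Phi * norm x \<le> norm (Phi *v x)"
proof -
  define A where "A = transpose Phi ** Phi"
  have S: "symmetric_matrix A"
    unfolding A_def by (rule symmetric_matrix_transpose_mult_self)
  define m where "m = Min (eigenvalues A)"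
  have "m \<in> eigenvalues A"
    unfolding m_def
    by (rule Min_in[OF symmetric_matrix_eigenvalues_finite[OF S] symmetric_matrix_eigenvalues_nonempty[OF S]])
  then have m: "0 < m"
    using eigenvalue_transpose_mult_self_pos[OF inj] unfolding A_def by blast
  obtain l where l: "l \<in> eigenvalues A" and bound: "\<And>x. l * (x \<bullet> x) \<le> x \<bullet> (A *v x)"
    using symmetric_matrix_min_eigenvalue[OF S] by blast
  have "m \<le> l"
    unfolding m_def using symmetric_matrix_eigenvalues_finite[OF S] l by simp
  have sigma: "sigma_min Phi = sqrt m"
    by (simp add: sigma_min_def m_def A_def)
  then show "0 < sigma_min Phi"
    using m by simp
  have "(sqrt m * norm x)\<^sup>2 = m * (x \<bullet> x)"
    using m by (simp add: power_mult_distrib power2_norm_eq_inner)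
  also have "\<dots> \<le> l * (x \<bullet> x)"
    using \<open>m \<le> l\<close> by (simp add: mult_right_mono)
  also have "\<dots> \<le> (norm (Phi *v x))\<^sup>2"
    using bound[of x] inner_transpose_mult_self[of x Phi] by (simp add: A_def power2_norm_eq_inner)
  finally show "sigma_min Phi * norm x \<le> norm (Phi *v x)"
    unfolding sigma by (rule power2_le_imp_le) simp
qed

lemma full_rank_sigma_min_pos:
  fixes Phi :: "real ^ 'd::finite ^ 's::finite"
  assumes "dim ((\<lambda>i. Phi $ i) ` D) = CARD('d)"
  shows "0 < sigma_min Phi"
  by (rule sigma_min_pos_norm_le(1)) (rule full_rank_matrix_vector_mult_eq_0[OF assms])

definition lsq_solution :: "'s set \<Rightarrow> real ^ 'd::finite ^ 's::finite \<Rightarrow> real ^ 's \<Rightarrow> real ^ 'd" where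
  "lsq_solution D Phi y = matrix_inv (gram D Phi) *v (restrT D Phi *v y)"

lemma Mproj_eq_lsq_solution: "Mproj D Phi *v y = Phi *v lsq_solution D Phi y"
  by (simp add: Mproj_def lsq_solution_def matrix_vector_mul_assoc matrix_mul_assoc)

lemma gram_lsq_solution:
  fixes Phi :: "real ^ 'd::finite ^ 's::finite"
  assumes "dim ((\<lambda>i. Phi $ i) ` D) = CARD('d)"
  shows "gram D Phi *v lsq_solution D Phi y = restrT D Phi *v y"
  by (simp add: lsq_solution_def matrix_vector_mul_assoc matrix_mul_assoc gram_invertible[OF assms])

lemma gd_step_minus_lsq_solution:
  fixes Phi :: "real ^ 'd::finite ^ 's::finite"
  assumes "dim ((\<lambda>i. Phi $ i) ` D) = CARD('d)"
  shows "gd_step \<gamma> D Phi y \<theta> - lsq_solution D Phi y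
    = (mat 1 - \<gamma> *\<^sub>R gram D Phi) *v (\<theta> - lsq_solution D Phi y)"
  unfolding gd_step_def gram_lsq_solution[OF assms, symmetric]
  by (simp add: matrix_vector_mult_diff_rdistrib matrix_vector_mult_diff_distrib
      scaleR_matrix_vector_assoc[symmetric] algebra_simps)

lemma eigenvalues_mat_one_minus_scaleR:
  fixes G :: "real ^ 'n::finite ^ 'n"
  assumes "\<gamma> \<noteq> 0" and "l \<in> eigenvalues (mat 1 - \<gamma> *\<^sub>R G)"
  shows "\<exists>m\<in>eigenvalues G. l = 1 - \<gamma> * m"
proof -
  obtain v where v: "v \<noteq> 0" "v - \<gamma> *\<^sub>R (G *v v) = l *\<^sub>R v"
    using assms(2) unfolding eigenvalues_def
    by (auto simp: matrix_vector_mult_diff_rdistrib simp flip: scaleR_matrix_vector_assoc)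
  then have "\<gamma> *\<^sub>R (G *v v) = (1 - l) *\<^sub>R v"
    by (simp add: algebra_simps)
  then have "G *v v = ((1 - l) / \<gamma>) *\<^sub>R v"
    using assms(1) by (metis divide_inverse_commute scaleR_scaleR scaleR_one right_inverse mult.commute)
  then have "(1 - l) / \<gamma> \<in> eigenvalues G"
    using v(1) unfolding eigenvalues_def by blast
  then show ?thesis
    using assms(1) by force
qed

lemma gd_rate_nonneg:
  assumes "\<And>l. l \<in> eigenvalues (gram D Phi) \<Longrightarrow> \<bar>1 - \<gamma> * l\<bar> \<le> a"
  shows "0 \<le> a"
  using assms symmetric_matrix_eigenvalues_nonempty[OF symmetric_matrix_gram, of D Phi]
  by (meson abs_ge_zero all_not_in_conv order_trans)

lemma norm_gd_iterate_minus_lsq_solution_le: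
  fixes Phi :: "real ^ 'd::finite ^ 's::finite"
  assumes rank: "dim ((\<lambda>i. Phi $ i) ` D) = CARD('d)" and "\<gamma> > 0"
    and rate: "\<And>l. l \<in> eigenvalues (gram D Phi) \<Longrightarrow> \<bar>1 - \<gamma> * l\<bar> \<le> a"
  shows "norm ((gd_step \<gamma> D Phi y ^^ n) \<theta> - lsq_solution D Phi y) \<le> a ^ n * norm (\<theta> - lsq_solution D Phi y)"
proof (induction n)
  case (Suc n)
  let ?B = "mat 1 - \<gamma> *\<^sub>R gram D Phi"
  have "norm (?B *v x) \<le> a * norm x" for x
  proof (rule symmetric_matrix_norm_le)
    show "symmetric_matrix ?B"
      by (intro symmetric_matrix_diff symmetric_matrix_scaleR symmetric_matrix_mat symmetric_matrix_gram)
    show "\<bar>l\<bar> \<le> a" if "l \<in> eigenvalues ?B" for l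
      using eigenvalues_mat_one_minus_scaleR[OF _ that] \<open>\<gamma> > 0\<close> rate by force
  qed
  moreover have "0 \<le> a"
    by (rule gd_rate_nonneg) (rule rate)
  ultimately have "norm (?B *v ((gd_step \<gamma> D Phi y ^^ n) \<theta> - lsq_solution D Phi y))
      \<le> a * (a ^ n * norm (\<theta> - lsq_solution D Phi y))"
    using mult_left_mono[OF Suc.IH] order_trans by blast
  then show ?case
    by (simp add: gd_step_minus_lsq_solution[OF rank])
qed simp

text \<open>The factor converts the Euclidean contraction of \<open>\<theta>\<close> into the sup norm of \<open>\<Phi> \<theta>\<close>:
  \<open>\<parallel>\<Phi> v\<parallel>\<^sub>\<infinity> \<le> \<parallel>\<Phi>\<parallel>\<^sub>\<infinity> \<parallel>v\<parallel>\<^sub>2\<close> and \<open>\<sigma>\<^sub>m\<^sub>i\<^sub>n \<parallel>v\<parallel>\<^sub>2 \<le> \<parallel>\<Phi> v\<parallel>\<^sub>2 \<le> \<surd>|S| \<parallel>\<Phi> v\<parallel>\<^sub>\<infinity>\<close>.\<close>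
lemma supnorm_gd_iterate_error:
  fixes Phi :: "real ^ 'd::finite ^ 's::finite"
  assumes rank: "dim ((\<lambda>i. Phi $ i) ` D) = CARD('d)" and "\<gamma> > 0"
    and rate: "\<And>l. l \<in> eigenvalues (gram D Phi) \<Longrightarrow> \<bar>1 - \<gamma> * l\<bar> \<le> a"
  shows "supnorm (Phi *v (gd_step \<gamma> D Phi y ^^ n) \<theta> - Mproj D Phi *v y)
    \<le> sqrt (real CARD('s)) * matnorm_inf Phi / sigma_min Phi * a ^ n * supnorm (Phi *v \<theta> - Mproj D Phi *v y)"
proof -
  define \<theta>s where "\<theta>s = lsq_solution D Phi y"
  define \<sigma> where "\<sigma> = sigma_min Phi"
  define K where "K = matnorm_inf Phi"
  have K: "0 \<le> K"
    unfolding K_def by (rule matnorm_inf_nonneg)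
  have "0 \<le> a"
    by (rule gd_rate_nonneg) (rule rate)
  have inj: "Phi *v x = 0 \<Longrightarrow> x = 0" for x
    by (rule full_rank_matrix_vector_mult_eq_0[OF rank])
  have "0 < \<sigma>"
    unfolding \<sigma>_def by (rule sigma_min_pos_norm_le(1)[OF inj])
  moreover have "\<sigma> * norm (\<theta> - \<theta>s) \<le> norm (Phi *v (\<theta> - \<theta>s))"
    unfolding \<sigma>_def by (rule sigma_min_pos_norm_le(2)[OF inj])
  ultimately have "norm (\<theta> - \<theta>s) \<le> sqrt (real CARD('s)) * supnorm (Phi *v (\<theta> - \<theta>s)) / \<sigma>"
    using norm_le_sqrt_card_supnorm[of "Phi *v (\<theta> - \<theta>s)"] by (simp add: le_divide_eq mult.commute)
  then have gd: "norm ((gd_step \<gamma> D Phi y ^^ n) \<theta> - \<theta>s)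
      \<le> a ^ n * (sqrt (real CARD('s)) * supnorm (Phi *v (\<theta> - \<theta>s)) / \<sigma>)"
    using norm_gd_iterate_minus_lsq_solution_le[OF rank \<open>\<gamma> > 0\<close> rate, where y = y and n = n and \<theta> = \<theta>] \<open>0 \<le> a\<close>
    unfolding \<theta>s_def by (meson mult_left_mono order_trans zero_le_power)
  have "supnorm (Phi *v (gd_step \<gamma> D Phi y ^^ n) \<theta> - Mproj D Phi *v y)
      = supnorm (Phi *v ((gd_step \<gamma> D Phi y ^^ n) \<theta> - \<theta>s))"
    by (simp add: \<theta>s_def Mproj_eq_lsq_solution matrix_vector_mult_diff_distrib)
  also have "\<dots> \<le> K * supnorm ((gd_step \<gamma> D Phi y ^^ n) \<theta> - \<theta>s)"
    unfolding K_def by (rule supnorm_matrix_vector_mult_le)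
  also have "\<dots> \<le> K * norm ((gd_step \<gamma> D Phi y ^^ n) \<theta> - \<theta>s)"
    by (rule mult_left_mono[OF supnorm_le_norm K])
  also have "\<dots> \<le> K * (a ^ n * (sqrt (real CARD('s)) * supnorm (Phi *v (\<theta> - \<theta>s)) / \<sigma>))"
    by (rule mult_left_mono[OF gd K])
  also have "\<dots> = sqrt (real CARD('s)) * K / \<sigma> * a ^ n * supnorm (Phi *v \<theta> - Mproj D Phi *v y)"
    by (simp add: \<theta>s_def Mproj_eq_lsq_solution matrix_vector_mult_diff_distrib)
  finally show ?thesis
    unfolding K_def \<sigma>_def .
qed

section \<open>Scalar estimates\<close>

text \<open>For \<open>x = 0\<close> the hypothesis degenerates to \<open>n > 0\<close>, since \<open>ln (1 / 0) = ln 0 = 0\<close>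
  and division by zero yields zero.\<close>
lemma mult_power_less_one:
  fixes x b :: real
  assumes "0 \<le> x" "x < 1" "0 \<le> b" and n: "ln b / ln (1 / x) < real n"
  shows "b * x ^ n < 1"
proof (cases "x = 0 \<or> b = 0")
  case True
  then show ?thesis
    using n by (auto simp: power_0_left)
next
  case False
  then have x: "0 < x" and b: "0 < b"
    using assms by auto
  have "0 < ln (1 / x)"
    using x \<open>x < 1\<close> by simp
  then have "ln b < ln ((1 / x) ^ n)"
    using n x by (simp add: ln_realpow divide_less_eq mult.commute)
  then have "b < 1 / x ^ n"
    using b x by (simp add: power_one_over)
  then show ?thesis
    using x by (simp add: less_divide_eq)
qed

lemma le_SUP_finite:
  fixes f :: "'b::finite \<Rightarrow> real"
  shows "f x \<le> (SUP x. f x)"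
  by (rule cSUP_upper) (auto intro: bdd_above_finite)

lemma le_SUP_comp_finite:
  fixes g :: "'b::finite \<Rightarrow> real"
  shows "g (D k) \<le> (SUP k. g (D k))"
proof (rule cSUP_upper)
  have "range (\<lambda>k. g (D k)) \<subseteq> range g"
    by auto
  then show "bdd_above (range (\<lambda>k. g (D k)))"
    by (meson bdd_above_finite finite finite_subset finite_imageI)
qed simp

lemma le_SUP_SUP_comp_finite:
  fixes g :: "'b::finite \<Rightarrow> 'c::finite \<Rightarrow> real"
  shows "g (D k) x \<le> (SUP k. SUP x. g (D k) x)"
  using order_trans[OF le_SUP_finite[of "g (D k)" x] le_SUP_comp_finite[of "\<lambda>S. SUP x. g S x" D k]] by simp

lemma le_SUP_Max_comp_finite:
  fixes A :: "'b::finite \<Rightarrow> 'c set" and f :: "'c \<Rightarrow> real"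
  assumes "finite (A (D k))" and "x \<in> A (D k)"
  shows "f x \<le> (SUP k. Max (f ` A (D k)))"
  using order_trans[OF Max_ge[OF finite_imageI[OF assms(1)] imageI[OF assms(2)]]
      le_SUP_comp_finite[of "\<lambda>S. Max (f ` A S)" D k]]
  by simp

lemma linear_recursion_bound:
  fixes e :: "nat \<Rightarrow> real"
  assumes "0 \<le> \<beta>" "\<beta> < 1" "0 \<le> \<tau>" and e_rec: "\<And>k. e (Suc k) \<le> \<beta> * e k + \<tau>"
  shows "e k \<le> \<beta> ^ k * e 0 + \<tau> / (1 - \<beta>)"
proof (induction k)
  case (Suc k)
  have "e (Suc k) \<le> \<beta> * (\<beta> ^ k * e 0 + \<tau> / (1 - \<beta>)) + \<tau>"
    using e_rec[of k] mult_left_mono[OF Suc.IH \<open>0 \<le> \<beta>\<close>] by linarith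
  also have "\<dots> = \<beta> ^ Suc k * e 0 + \<tau> / (1 - \<beta>)"
    using \<open>\<beta> < 1\<close> by (simp add: field_simps)
  finally show ?case .
qed (use assms in simp)

text \<open>The convolution \<open>\<Sum>\<^sub>j\<^sub><\<^sub>k q\<^sup>k\<^sup>-\<^sup>1\<^sup>-\<^sup>j \<beta>\<^sup>j\<close> is at most \<open>k max(q, \<beta>)\<^sup>k\<^sup>-\<^sup>1\<close>, one step at a time.\<close>
lemma convolution_power_le:
  fixes q \<beta> :: real
  assumes "0 \<le> q" "0 \<le> \<beta>"
  shows "q * (real k * max q \<beta> ^ (k - 1)) + \<beta> ^ k \<le> real (Suc k) * max q \<beta> ^ k"
proof -
  let ?M = "max q \<beta>"
  have "q * (real k * ?M ^ (k - 1)) \<le> real k * ?M ^ k"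
  proof (cases k)
    case (Suc j)
    have "q * ?M ^ j \<le> ?M * ?M ^ j"
      using assms by (intro mult_right_mono) simp_all
    then show ?thesis
      using Suc mult_left_mono[of "q * ?M ^ j" "?M * ?M ^ j" "real k"] by (simp add: algebra_simps)
  qed simp
  moreover have "\<beta> ^ k \<le> ?M ^ k"
    using assms by (simp add: power_mono)
  ultimately show ?thesis
    by (simp add: algebra_simps)
qed

lemma coupled_recursion_bound:
  fixes a e :: "nat \<Rightarrow> real"
  assumes q: "0 \<le> q" "q < 1" and \<beta>: "0 \<le> \<beta>" "\<beta> < 1" and "\<alpha> < 1" and "0 \<le> \<tau>" "0 \<le> \<epsilon>"
    and e_nonneg: "\<And>k. 0 \<le> e k"
    and a_rec: "\<And>k. a (Suc k) \<le> q * a k + (\<epsilon> + 2 * q * e k) / (1 - \<alpha>)"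
    and e_rec: "\<And>k. e (Suc k) \<le> \<beta> * e k + \<tau>"
    and a0: "a 0 \<le> 1 / (1 - \<alpha>)"
  shows "a k \<le> q ^ k / (1 - \<alpha>) + 2 * q * e 0 / (1 - \<alpha>) * real k * (max q \<beta>) ^ (k - 1)
      + (2 * q * (\<tau> / (1 - \<beta>)) + \<epsilon>) / ((1 - q) * (1 - \<alpha>))"
proof -
  define M where "M = max q \<beta>"
  define Z where "Z = 2 * q * e 0 / (1 - \<alpha>)"
  define K where "K = (2 * q * (\<tau> / (1 - \<beta>)) + \<epsilon>) / (1 - \<alpha>)"
  have Z: "0 \<le> Z"
    using q e_nonneg[of 0] \<open>\<alpha> < 1\<close> by (simp add: Z_def)
  have a_bound: "a k \<le> q ^ k * a 0 + Z * (real k * M ^ (k - 1)) + K / (1 - q)" for k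
  proof (induction k)
    case 0
    have "0 \<le> K"
      using q \<beta> \<open>0 \<le> \<tau>\<close> \<open>0 \<le> \<epsilon>\<close> \<open>\<alpha> < 1\<close> by (simp add: K_def)
    then show ?case
      using q by simp
  next
    case (Suc k)
    have "(\<epsilon> + 2 * q * e k) / (1 - \<alpha>) \<le> (\<epsilon> + 2 * q * (\<beta> ^ k * e 0 + \<tau> / (1 - \<beta>))) / (1 - \<alpha>)"
      using linear_recursion_bound[where e = e, OF \<beta> \<open>0 \<le> \<tau>\<close> e_rec, of k] q \<open>\<alpha> < 1\<close>
      by (simp add: divide_right_mono mult_left_mono)
    then have "a (Suc k) \<le> q * (q ^ k * a 0 + Z * (real k * M ^ (k - 1)) + K / (1 - q))
        + (\<epsilon> + 2 * q * (\<beta> ^ k * e 0 + \<tau> / (1 - \<beta>))) / (1 - \<alpha>)"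
      using a_rec[of k] mult_left_mono[OF Suc.IH q(1)] by linarith
    also have "\<dots> = q ^ Suc k * a 0 + Z * (q * (real k * M ^ (k - 1)) + \<beta> ^ k) + (q * (K / (1 - q)) + K)"
      using \<open>\<alpha> < 1\<close> unfolding Z_def K_def by (simp add: field_simps)
    also have "q * (K / (1 - q)) + K = K / (1 - q)"
      using q by (simp add: field_simps)
    also have "q ^ Suc k * a 0 + Z * (q * (real k * M ^ (k - 1)) + \<beta> ^ k) + K / (1 - q)
        \<le> q ^ Suc k * a 0 + Z * (real (Suc k) * M ^ k) + K / (1 - q)"
      using mult_left_mono[OF convolution_power_le[OF q(1) \<beta>(1), of k] Z] unfolding M_def by linarith
    finally show ?case
      by simp
  qed
  have "q ^ k * a 0 \<le> q ^ k / (1 - \<alpha>)"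
    using mult_left_mono[OF a0, of "q ^ k"] q by simp
  then have "a k \<le> q ^ k / (1 - \<alpha>) + Z * (real k * M ^ (k - 1)) + K / (1 - q)"
    using a_bound[of k] by linarith
  then show ?thesis
    by (simp add: Z_def M_def K_def mult.assoc mult.commute[of "1 - q"])
qed

section \<open>Gradient-descent approximate policy iteration\<close>

lemma gd_api_constants:
  fixes \<alpha> \<delta>FV \<delta>app \<epsilon>PE c \<alpha>GD :: real and m :: nat
  assumes "0 < \<alpha>" "\<alpha> < 1" "0 \<le> \<delta>FV" "0 \<le> \<delta>app" "0 \<le> \<epsilon>PE" "0 \<le> c" "0 \<le> \<alpha>GD" "\<alpha>GD < 1"
    and "ln (2 * \<delta>FV) / ln (1 / \<alpha>) < real N" and "ln (3 * c) / ln (1 / \<alpha>GD) < real \<eta>"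
  defines "\<beta> \<equiv> \<alpha> ^ N * \<delta>FV + c * \<alpha>GD ^ \<eta> * (\<alpha> ^ N * \<delta>FV + 1)"
    and "\<tau> \<equiv> (1 + c * \<alpha>GD ^ \<eta>) * ((\<alpha> ^ m + \<alpha> ^ N) / (1 - \<alpha>) * \<delta>FV + \<delta>app + \<delta>FV * \<epsilon>PE) + c * \<alpha>GD ^ \<eta> / (1 - \<alpha>)"
  shows "0 \<le> \<beta>" and "\<beta> < 1" and "0 \<le> \<tau>"
proof -
  have "\<alpha> ^ N * \<delta>FV < 1 / 2"
    using mult_power_less_one[of \<alpha> "2 * \<delta>FV" N] assms by (simp add: algebra_simps)
  moreover have "c * \<alpha>GD ^ \<eta> < 1 / 3"
    using mult_power_less_one[of \<alpha>GD "3 * c" \<eta>] assms by (simp add: algebra_simps)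
  moreover have "c * \<alpha>GD ^ \<eta> * (\<alpha> ^ N * \<delta>FV + 1) \<le> c * \<alpha>GD ^ \<eta> * (3 / 2)"
    using assms calculation(1) by (intro mult_left_mono) simp_all
  ultimately show "\<beta> < 1"
    unfolding \<beta>_def by linarith
  show "0 \<le> \<beta>" and "0 \<le> \<tau>"
    unfolding \<beta>_def \<tau>_def using assms by simp_all
qed

context discounted_mdp
begin

lemma rollout_target_error:
  assumes "H \<ge> 1" and FV: "matnorm_inf M \<le> \<delta>FV"
    and app: "supnorm (M *v Jpol P r \<alpha> mu' - Jpol P r \<alpha> mu') \<le> \<delta>app"
    and w: "supnorm w \<le> \<epsilon>PE"
  shows "supnorm (M *v ((Tpol P r \<alpha> mu' ^^ m) ((Tbell P r \<alpha> ^^ (H - 1)) u) + w) - Jpol P r \<alpha> mu')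
    \<le> \<delta>FV * \<alpha> ^ (m + H - 1) * supnorm (u - Jpol P r \<alpha> mu) + \<delta>FV * \<alpha> ^ m / (1 - \<alpha>) + \<delta>app + \<delta>FV * \<epsilon>PE"
proof -
  let ?T = "Tbell P r \<alpha> ^^ (H - 1)" and ?Tm = "Tpol P r \<alpha> mu' ^^ m"
  let ?V = "Jpol P r \<alpha> mu" and ?V' = "Jpol P r \<alpha> mu'"
  have \<delta>FV: "0 \<le> \<delta>FV"
    using FV matnorm_inf_nonneg order_trans by blast
  have "supnorm (?T u - ?V') \<le> supnorm (?T u - ?T ?V) + supnorm (?T ?V - ?V')"
    by (rule supnorm_diff_triangle)
  also have "\<dots> \<le> \<alpha> ^ (H - 1) * supnorm (u - ?V) + 1 / (1 - \<alpha>)"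
    using discount_monotone_supnorm[OF discount_monotone_funpow[OF discount_monotone_Tbell]]
      supnorm_diff_le_box[OF Tbell_funpow_bounded Jpol_bounded] Jpol_bounded by (meson add_mono)
  finally have "supnorm (?Tm (?T u) - ?V') \<le> \<alpha> ^ m * (\<alpha> ^ (H - 1) * supnorm (u - ?V) + 1 / (1 - \<alpha>))"
    using discount_monotone_supnorm[OF discount_monotone_funpow[OF discount_monotone_Tpol], of m mu' "?T u" ?V']
      discount_pos by (simp add: Tpol_funpow_Jpol order_trans mult_left_mono)
  then have "supnorm (M *v (?Tm (?T u) - ?V')) \<le> \<delta>FV * (\<alpha> ^ m * (\<alpha> ^ (H - 1) * supnorm (u - ?V) + 1 / (1 - \<alpha>)))"
    using supnorm_mult_le_of_matnorm_le[OF FV] \<delta>FV by (meson mult_left_mono order_trans)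
  also have "\<dots> = \<delta>FV * \<alpha> ^ (m + H - 1) * supnorm (u - ?V) + \<delta>FV * \<alpha> ^ m / (1 - \<alpha>)"
    using \<open>H \<ge> 1\<close> by (simp add: algebra_simps flip: power_add)
  finally have rollout: "supnorm (M *v (?Tm (?T u) - ?V')) \<le> \<dots>" .
  have noise: "supnorm (M *v w) \<le> \<delta>FV * \<epsilon>PE"
    using supnorm_mult_le_of_matnorm_le[OF FV] w \<delta>FV by (meson mult_left_mono order_trans)
  have decomposition: "M *v (?Tm (?T u) + w) - ?V' = (M *v (?Tm (?T u) - ?V') + (M *v ?V' - ?V')) + M *v w"
    by (simp add: matrix_vector_right_distrib matrix_vector_mult_diff_distrib)
  show ?thesis
    unfolding decomposition
    using rollout noise app supnorm_triangle[of "M *v (?Tm (?T u) - ?V') + (M *v ?V' - ?V')" "M *v w"]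
      supnorm_triangle[of "M *v (?Tm (?T u) - ?V')" "M *v ?V' - ?V'"]
    by linarith
qed

lemma gd_api_error_step:
  fixes Phi :: "real ^ 'd::finite ^ 's"
  assumes rank: "dim ((\<lambda>i. Phi $ i) ` D) = CARD('d)" and "\<gamma> > 0" and "H \<ge> 1"
    and rate: "\<And>l. l \<in> eigenvalues (gram D Phi) \<Longrightarrow> \<bar>1 - \<gamma> * l\<bar> \<le> a"
    and FV: "matnorm_inf (Mproj D Phi) \<le> \<delta>FV"
    and app: "supnorm (Mproj D Phi *v Jpol P r \<alpha> mu' - Jpol P r \<alpha> mu') \<le> \<delta>app"
    and w: "supnorm w \<le> \<epsilon>PE"
    and \<theta>': "\<theta>' = (gd_step \<gamma> D Phi ((Tpol P r \<alpha> mu' ^^ m) ((Tbell P r \<alpha> ^^ (H - 1)) (Phi *v \<theta>)) + w) ^^ \<eta>) \<theta>"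
  defines "C \<equiv> sqrt (real CARD('s)) * matnorm_inf Phi / sigma_min Phi * a ^ \<eta>"
  shows "supnorm (Phi *v \<theta>' - Jpol P r \<alpha> mu')
    \<le> (\<alpha> ^ (m + H - 1) * \<delta>FV + C * (\<alpha> ^ (m + H - 1) * \<delta>FV + 1)) * supnorm (Phi *v \<theta> - Jpol P r \<alpha> mu)
      + ((1 + C) * ((\<alpha> ^ m + \<alpha> ^ (m + H - 1)) / (1 - \<alpha>) * \<delta>FV + \<delta>app + \<delta>FV * \<epsilon>PE) + C / (1 - \<alpha>))"
proof -
  define y where "y = (Tpol P r \<alpha> mu' ^^ m) ((Tbell P r \<alpha> ^^ (H - 1)) (Phi *v \<theta>)) + w"
  define e where "e = supnorm (Phi *v \<theta> - Jpol P r \<alpha> mu)"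
  define X where "X = supnorm (Mproj D Phi *v y - Jpol P r \<alpha> mu')"
  define K where "K = 1 / (1 - \<alpha>)"
  define n where "n = m + H - 1"
  have K: "0 \<le> K"
    using discount_less_one by (simp add: K_def)
  have \<delta>FV: "0 \<le> \<delta>FV"
    using FV matnorm_inf_nonneg order_trans by blast
  have "0 \<le> a"
    by (rule gd_rate_nonneg) (rule rate)
  then have C: "0 \<le> C"
    unfolding C_def using full_rank_sigma_min_pos[OF rank] by (simp add: matnorm_inf_nonneg)
  have target: "X \<le> \<delta>FV * \<alpha> ^ n * e + \<delta>FV * \<alpha> ^ m * K + \<delta>app + \<delta>FV * \<epsilon>PE"
    using rollout_target_error[OF \<open>H \<ge> 1\<close> FV app w, of m "Phi *v \<theta>" mu]
    unfolding X_def y_def e_def K_def n_def by (simp add: supnorm_minus_commute)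
  have gd: "supnorm (Phi *v \<theta>' - Mproj D Phi *v y) \<le> C * supnorm (Phi *v \<theta> - Mproj D Phi *v y)"
    using supnorm_gd_iterate_error[OF rank \<open>\<gamma> > 0\<close> rate, where y = y and n = \<eta> and \<theta> = \<theta>]
    unfolding \<theta>' y_def C_def by simp
  have start: "supnorm (Phi *v \<theta> - Mproj D Phi *v y) \<le> e + K + X"
    unfolding e_def K_def X_def by (rule supnorm_diff_le_through_box[OF Jpol_bounded Jpol_bounded])
  have "supnorm (Phi *v \<theta>' - Jpol P r \<alpha> mu') \<le> C * (e + K + X) + X"
    using gd mult_left_mono[OF start C] supnorm_diff_triangle[of "Phi *v \<theta>'" "Jpol P r \<alpha> mu'" "Mproj D Phi *v y"]
    unfolding X_def by linarith
  also have "\<dots> = C * e + C * K + (1 + C) * X"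
    by (simp add: algebra_simps)
  also have "\<dots> \<le> C * e + C * K + (1 + C) * (\<delta>FV * \<alpha> ^ n * e + \<delta>FV * \<alpha> ^ m * K + \<delta>app + \<delta>FV * \<epsilon>PE)"
    using mult_left_mono[OF target, of "1 + C"] C by simp
  also have "\<dots> \<le> C * e + C * K + (1 + C) * (\<delta>FV * \<alpha> ^ n * e + \<delta>FV * \<alpha> ^ m * K + \<delta>app + \<delta>FV * \<epsilon>PE)
      + (1 + C) * (\<delta>FV * \<alpha> ^ n * K)"
    using C \<delta>FV K discount_pos by simp
  also have "\<dots> = (\<alpha> ^ n * \<delta>FV + C * (\<alpha> ^ n * \<delta>FV + 1)) * e
      + ((1 + C) * ((\<alpha> ^ m + \<alpha> ^ n) / (1 - \<alpha>) * \<delta>FV + \<delta>app + \<delta>FV * \<epsilon>PE) + C / (1 - \<alpha>))"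
    unfolding K_def by (simp add: algebra_simps add_divide_distrib)
  finally show ?thesis
    unfolding e_def n_def .
qed

lemma api_error_bound:
  assumes "H \<ge> 1" and \<beta>: "0 \<le> \<beta>" "\<beta> < 1" and "0 \<le> \<tau>" "0 \<le> \<epsilon>"
    and greedy: "\<And>k. supnorm ((Tbell P r \<alpha> ^^ H) (J k)
      - Tpol P r \<alpha> (mu (Suc k)) ((Tbell P r \<alpha> ^^ (H - 1)) (J k))) \<le> \<epsilon>"
    and e_rec: "\<And>k. supnorm (J (Suc k) - Jpol P r \<alpha> (mu (Suc k))) \<le> \<beta> * supnorm (J k - Jpol P r \<alpha> (mu k)) + \<tau>"
  shows "supnorm (Jpol P r \<alpha> (mu k) - Jstar P r \<alpha>)
    \<le> \<alpha> ^ (k * H) / (1 - \<alpha>)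
      + 2 * \<alpha> ^ H * supnorm (Jpol P r \<alpha> (mu 0) - J 0) / (1 - \<alpha>) * real k * (max (\<alpha> ^ H) \<beta>) ^ (k - 1)
      + (2 * \<alpha> ^ H * (\<tau> / (1 - \<beta>)) + \<epsilon>) / ((1 - \<alpha> ^ H) * (1 - \<alpha>))"
proof -
  have q: "0 \<le> \<alpha> ^ H" "\<alpha> ^ H < 1"
    using discount_pos discount_less_one \<open>H \<ge> 1\<close> by (simp_all add: power_less_one_iff)
  have "supnorm (Jpol P r \<alpha> (mu (Suc k)) - Jstar P r \<alpha>) \<le> \<alpha> ^ H * supnorm (Jpol P r \<alpha> (mu k) - Jstar P r \<alpha>)
      + (\<epsilon> + 2 * \<alpha> ^ H * supnorm (J k - Jpol P r \<alpha> (mu k))) / (1 - \<alpha>)" for k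
    by (rule policy_improvement[OF \<open>H \<ge> 1\<close> greedy])
  from coupled_recursion_bound[where a = "\<lambda>k. supnorm (Jpol P r \<alpha> (mu k) - Jstar P r \<alpha>)"
      and e = "\<lambda>k. supnorm (J k - Jpol P r \<alpha> (mu k))",
      OF q \<beta> discount_less_one \<open>0 \<le> \<tau>\<close> \<open>0 \<le> \<epsilon>\<close> supnorm_nonneg this e_rec
      supnorm_diff_le_box[OF Jpol_bounded Jstar_bounded]]
  show ?thesis
    by (simp add: power_mult[symmetric] mult.commute[of _ H] supnorm_minus_commute[of "J 0"])
qed

end

theorem theorem2:
  fixes P :: "'a::finite \<Rightarrow> real ^ 's::finite ^ 's"
    and r :: "'s \<Rightarrow> 'a \<Rightarrow> real"
    and \<alpha> \<gamma> \<epsilon>LA \<epsilon>PE :: real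
    and m H \<eta> :: nat
    and Phi :: "real ^ 'd::finite ^ 's"
    and D :: "nat \<Rightarrow> 's set"
    and mu :: "nat \<Rightarrow> ('s \<Rightarrow> 'a)"
    and w :: "nat \<Rightarrow> real ^ 's"
    and \<theta> :: "nat \<Rightarrow> real ^ 'd"
    and J :: "nat \<Rightarrow> real ^ 's"
    and \<delta>FV \<delta>app \<alpha>GD c \<beta> \<tau> :: real
  defines "T \<equiv> Tbell P r \<alpha>"
    and "Tmu \<equiv> Tpol P r \<alpha>"
  assumes mdp: "is_mdp P r \<alpha>"
    and m: "m \<ge> 1" and H: "H \<ge> 1" and eta: "\<eta> \<ge> 1"
    and gamma: "\<gamma> > 0"
    and eps: "\<epsilon>LA \<ge> 0" "\<epsilon>PE \<ge> 0"
    and rank: "\<And>k. dim ((\<lambda>i. Phi $ i) ` D k) = CARD('d)"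
    and J_def: "\<And>k. J k = Phi *v \<theta> k"
    and greedy: "\<And>k. supnorm ((T ^^ H) (J k) - Tmu (mu (Suc k)) ((T ^^ (H - 1)) (J k))) \<le> \<epsilon>LA"
    and w_supp: "\<And>k i. i \<notin> D k \<Longrightarrow> w (Suc k) $ i = 0"
    and w_bound: "\<And>k. supnorm (w (Suc k)) \<le> \<epsilon>PE"
    and theta_step: "\<And>k. \<theta> (Suc k) =
          (gd_step \<gamma> (D k) Phi ((Tmu (mu (Suc k)) ^^ m) ((T ^^ (H - 1)) (J k)) + w (Suc k)) ^^ \<eta>) (\<theta> k)"
    and dFV: "\<delta>FV = (SUP k. matnorm_inf (Mproj (D k) Phi))"
    and dapp: "\<delta>app = (SUP k. SUP pol. supnorm (Mproj (D k) Phi *v Jpol P r \<alpha> pol - Jpol P r \<alpha> pol))"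
    and aGD: "\<alpha>GD = (SUP k. Max ((\<lambda>l. \<bar>1 - \<gamma> * l\<bar>) ` eigenvalues (gram (D k) Phi)))"
    and aGD1: "\<alpha>GD < 1"
    and mH: "real (m + H - 1) > ln (2 * \<delta>FV) / ln (1 / \<alpha>)"
    and eta_big: "real \<eta> > ln (3 * sqrt (real CARD('s)) * matnorm_inf Phi / sigma_min Phi) / ln (1 / \<alpha>GD)"
    and c_def: "c = sqrt (real CARD('s)) * matnorm_inf Phi / sigma_min Phi"
    and beta_def: "\<beta> = \<alpha> ^ (m + H - 1) * \<delta>FV + c * \<alpha>GD ^ \<eta> * (\<alpha> ^ (m + H - 1) * \<delta>FV + 1)"
    and tau_def: "\<tau> = (1 + c * \<alpha>GD ^ \<eta>) * ((\<alpha> ^ m + \<alpha> ^ (m + H - 1)) / (1 - \<alpha>) * \<delta>FV + \<delta>app + \<delta>FV * \<epsilon>PE)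
                     + c * \<alpha>GD ^ \<eta> / (1 - \<alpha>)"
  shows "\<beta> < 1 \<and>
    (\<forall>k\<ge>1. supnorm (Jpol P r \<alpha> (mu k) - Jstar P r \<alpha>)
       \<le> \<alpha> ^ (k * H) / (1 - \<alpha>)
         + 2 * \<alpha> ^ H * supnorm (Jpol P r \<alpha> (mu 0) - J 0) / (1 - \<alpha>) * real k * (max (\<alpha> ^ H) \<beta>) ^ (k - 1)
         + (2 * \<alpha> ^ H * (\<tau> / (1 - \<beta>)) + \<epsilon>LA) / ((1 - \<alpha> ^ H) * (1 - \<alpha>)))"
proof -
  interpret discounted_mdp P r \<alpha>
    by (rule discounted_mdp.intro[OF mdp])
  have FV: "matnorm_inf (Mproj (D k) Phi) \<le> \<delta>FV" for k
    unfolding dFV by (rule le_SUP_comp_finite)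
  have app: "supnorm (Mproj (D k) Phi *v Jpol P r \<alpha> pol - Jpol P r \<alpha> pol) \<le> \<delta>app" for k pol
    unfolding dapp by (rule le_SUP_SUP_comp_finite)
  have rate: "\<bar>1 - \<gamma> * l\<bar> \<le> \<alpha>GD" if "l \<in> eigenvalues (gram (D k) Phi)" for k l
    unfolding aGD using symmetric_matrix_eigenvalues_finite[OF symmetric_matrix_gram] that
    by (rule le_SUP_Max_comp_finite[where A = "\<lambda>S. eigenvalues (gram S Phi)"])
  have "0 \<le> \<delta>FV" and "0 \<le> \<delta>app"
    using FV[of 0] app[of 0 "mu 0"] matnorm_inf_nonneg supnorm_nonneg order_trans by blast+
  moreover have "0 \<le> c"
    unfolding c_def using full_rank_sigma_min_pos[OF rank[of 0]] by (simp add: matnorm_inf_nonneg)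
  moreover have "0 \<le> \<alpha>GD"
    by (rule gd_rate_nonneg) (rule rate)
  moreover have "ln (3 * c) / ln (1 / \<alpha>GD) < real \<eta>"
    using eta_big by (simp add: c_def mult.assoc)
  ultimately have \<beta>: "0 \<le> \<beta>" "\<beta> < 1" and "0 \<le> \<tau>"
    using gd_api_constants[OF discount_pos discount_less_one _ _ eps(2) _ _ aGD1 mH]
    unfolding beta_def tau_def by blast+
  have "supnorm (J (Suc k) - Jpol P r \<alpha> (mu (Suc k))) \<le> \<beta> * supnorm (J k - Jpol P r \<alpha> (mu k)) + \<tau>" for k
    unfolding J_def beta_def tau_def c_def
    by (rule gd_api_error_step[OF rank gamma H rate FV app w_bound theta_step[unfolded T_def Tmu_def J_def]])
  then show ?thesis
    using api_error_bound[where J = J and mu = mu, OF H \<beta> \<open>0 \<le> \<tau>\<close> eps(1) greedy[unfolded T_def Tmu_def]] \<beta>(2)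
    by blast
qed

end
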